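(* For every integer $n\ge 3$, the complete graph $K_n$ satisfies $\mathrm{ppn}(K_n)=\lceil \log_2(n)\rceil - 1$.
   Context: A $k$-prime product distance labeling of a finite graph $G$ (for a positive integer $k$) is an injective map $L:V(G)\to\mathbb{Z}$ such that $|L(u)-L(v)|>1$ for all distinct vertices $u,v$ of $G$, and such that for every pair of adjacent vertices $u,v$ the integer $|L(u)-L(v)|$ has at most $k$ prime factors counted with multiplicity. $G$ is a $k$-prime product graph if it has such a labeling. The prime product number $\mathrm{ppn}(G)$ is the integer $k$ such that $G$ is a $k$-prime product graph but not a $(k-1)$-prime product graph (equivalently, the least such $k$). *)

theory Defs
  imports Complex_Main "HOL-Computational_Algebra.Primes"
begin

definition Omega :: "nat \<Rightarrow> nat" where
  "Omega m = size (prime_factorization m)"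

(* A finite simple graph is given by a vertex set V and a symmetric,
   irreflexive adjacency relation E. *)
definition k_ppd_labeling :: "'a set \<Rightarrow> ('a \<Rightarrow> 'a \<Rightarrow> bool) \<Rightarrow> nat \<Rightarrow> ('a \<Rightarrow> int) \<Rightarrow> bool" where
  "k_ppd_labeling V E k L \<longleftrightarrow>
     inj_on L V \<and>
     (\<forall>u\<in>V. \<forall>v\<in>V. u \<noteq> v \<longrightarrow> \<bar>L u - L v\<bar> > 1) \<and>
     (\<forall>u\<in>V. \<forall>v\<in>V. E u v \<longrightarrow> Omega (nat \<bar>L u - L v\<bar>) \<le> k)"

definition k_prime_product_graph :: "'a set \<Rightarrow> ('a \<Rightarrow> 'a \<Rightarrow> bool) \<Rightarrow> nat \<Rightarrow> bool" where
  "k_prime_product_graph V E k \<longleftrightarrow> (\<exists>L. k_ppd_labeling V E k L)"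

definition ppn :: "'a set \<Rightarrow> ('a \<Rightarrow> 'a \<Rightarrow> bool) \<Rightarrow> nat" where
  "ppn V E = (LEAST k. k \<ge> 1 \<and> k_prime_product_graph V E k)"

definition K_vertices :: "nat \<Rightarrow> nat set" where "K_vertices n = {0..<n}"
definition K_edges :: "nat \<Rightarrow> nat \<Rightarrow> bool" where "K_edges u v \<longleftrightarrow> u \<noteq> v"

end

theory Submission
  imports Defs "HOL-Library.Log_Nat"
begin

text \<open>
  Let \<open>2^j < n \<le> 2^(j+1)\<close>. Among any \<open>n\<close> integer labels, two agree modulo \<open>2^j\<close>, so their
  distance has at least \<open>j\<close> prime factors: \<open>ppn(K\<^sub>n) \<ge> j\<close>. Conversely, label the vertices
  \<open>x < 2^j\<close> by \<open>2x\<close> and the vertices \<open>x \<ge> 2^j\<close> by \<open>2x + 1\<close>. Two labels in the same half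
  differ by \<open>2d\<close> with \<open>0 < d < 2^j\<close>, hence by at most \<open>j\<close> primes; labels in different halves
  differ by an odd number below \<open>2^(j+2) \<le> 3^(j+1)\<close>, which has fewer than \<open>j + 1\<close> prime
  factors since all of them are at least 3. So \<open>ppn(K\<^sub>n) = j = \<lceil>log\<^sub>2 n\<rceil> - 1\<close>.
\<close>

lemma pow_size_le_prod_mset:
  fixes M :: "nat multiset"
  assumes "\<forall>x\<in>#M. b \<le> x"
  shows "b ^ size M \<le> prod_mset M"
  using assms
proof (induction M)
  case (add x M)
  then show ?case by (simp add: mult_le_mono)
qed simp

lemma pow_Omega_le:
  assumes "m > 0" and "\<forall>p\<in>prime_factors m. b \<le> p"
  shows "b ^ Omega m \<le> m"
  using pow_size_le_prod_mset[of "prime_factorization m" b] assms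
  by (simp add: Omega_def)

lemma prime_factor_of_odd_ge_3:
  fixes m p :: nat
  assumes "odd m" and "p \<in> prime_factors m"
  shows "3 \<le> p"
proof -
  have "p \<noteq> 2" using assms by auto
  with assms(2) show ?thesis using prime_ge_2_nat[of p] by fastforce
qed

lemma Omega_less_of_less_pow:
  fixes b m :: nat
  assumes "1 < b" and "m > 0" and "\<forall>p\<in>prime_factors m. b \<le> p" and "m < b ^ k"
  shows "Omega m < k"
proof -
  have "b ^ Omega m < b ^ k" using pow_Omega_le[OF assms(2,3)] assms(4) by linarith
  with assms(1) show ?thesis by (rule power_less_imp_less_exp)
qed

lemma Omega_ge_of_prime_power_dvd:
  assumes "prime p" and "m > 0" and "p ^ j dvd m"
  shows "j \<le> Omega m"
proof -
  obtain r where r: "m = p ^ j * r" using assms(3) by blast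
  with assms have "r \<noteq> 0" by auto
  then have "prime_factorization m = replicate_mset j p + prime_factorization r"
    using r assms(1) by (simp add: prime_factorization_mult prime_factorization_prime_power)
  then show ?thesis by (simp add: Omega_def)
qed

lemma Omega_double:
  assumes "r > 0"
  shows "Omega (2 * r) = Suc (Omega r)"
  using assms by (simp add: Omega_def prime_factorization_mult prime_factorization_prime)

lemma two_pow_plus_two_le_three_pow:
  assumes "j \<ge> 1"
  shows "(2::nat) ^ (j + 2) \<le> 3 ^ (j + 1)"
  using assms by (induction j rule: nat_induct_at_least) simp_all

lemma k_ppd_labeling_complete_lower_bound:
  assumes "2 ^ j < card V"
    and complete: "\<forall>u\<in>V. \<forall>v\<in>V. u \<noteq> v \<longrightarrow> E u v"
    and lab: "k_ppd_labeling V E k L"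
  shows "j \<le> k"
proof -
  let ?residue = "\<lambda>x. L x mod 2 ^ j"
  have "card (?residue ` V) \<le> card {0..<(2::int) ^ j}"
    by (rule card_mono) auto
  then have "card (?residue ` V) < card V" using assms(1) by (simp add: nat_power_eq)
  then obtain u v where uv: "u \<in> V" "v \<in> V" "u \<noteq> v" "?residue u = ?residue v"
    using pigeonhole unfolding inj_on_def by blast
  define d where "d = nat \<bar>L u - L v\<bar>"
  have gap: "\<bar>L u - L v\<bar> > 1" and "Omega d \<le> k"
    using lab complete uv unfolding k_ppd_labeling_def d_def by blast+
  have "d > 0" using gap unfolding d_def by simp
  moreover have "2 ^ j dvd d"
  proof -
    have "(2::int) ^ j dvd \<bar>L u - L v\<bar>" using uv(4) by (simp add: mod_eq_dvd_iff)
    then have "int (2 ^ j) dvd int d" unfolding d_def by simp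
    then show ?thesis by (simp only: of_nat_dvd_iff)
  qed
  ultimately have "j \<le> Omega d" by (intro Omega_ge_of_prime_power_dvd[of 2]) simp_all
  with \<open>Omega d \<le> k\<close> show ?thesis by simp
qed

lemma k_ppd_labeling_of_increasing:
  fixes L :: "nat \<Rightarrow> int"
  assumes "\<And>u v. u < v \<Longrightarrow> v < n \<Longrightarrow> L u + 1 < L v \<and> Omega (nat (L v - L u)) \<le> k"
  shows "k_ppd_labeling {0..<n} E k L"
proof -
  have gap: "1 < \<bar>L u - L v\<bar> \<and> Omega (nat \<bar>L u - L v\<bar>) \<le> k"
    if "u \<in> {0..<n}" "v \<in> {0..<n}" "u \<noteq> v" for u v
    using that assms[of u v] assms[of v u]
    by (cases u v rule: linorder_cases) (auto simp: abs_minus_commute)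
  then have "inj_on L {0..<n}" by (fastforce intro: inj_onI)
  moreover have "Omega (nat \<bar>L u - L v\<bar>) \<le> k" if "u \<in> {0..<n}" "v \<in> {0..<n}" for u v
    using gap[OF that] by (cases "u = v") (simp_all add: Omega_def)
  ultimately show ?thesis
    using gap unfolding k_ppd_labeling_def by blast
qed

definition split_double_label :: "nat \<Rightarrow> nat \<Rightarrow> nat" where
  "split_double_label j x = 2 * x + (if 2 ^ j \<le> x then 1 else 0)"

lemma Omega_double_diff_le:
  assumes "u < v" and "v - u < 2 ^ j"
  shows "Omega (2 * (v - u)) \<le> j"
proof -
  have "\<forall>p\<in>prime_factors (v - u). 2 \<le> p" by (auto intro: prime_ge_2_nat)
  then have "Omega (v - u) < j"
    using Omega_less_of_less_pow[of 2 "v - u" j] assms by simp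
  then show ?thesis using assms(1) by (simp add: Omega_double)
qed

lemma split_double_label_gap:
  assumes "j \<ge> 1" and "u < v" and "v < 2 ^ (j + 1)"
  defines "f \<equiv> split_double_label j"
  shows "f u + 2 \<le> f v \<and> Omega (f v - f u) \<le> j"
proof (cases "v < 2 ^ j \<or> 2 ^ j \<le> u")
  case True
  then have "f v - f u = 2 * (v - u)" and "v - u < 2 ^ j"
    using assms(2,3) by (auto simp: f_def split_double_label_def)
  then show ?thesis
    using Omega_double_diff_le[OF assms(2)] assms(2) by (auto simp: f_def split_double_label_def)
next
  case False
  then have diff: "f v - f u = 2 * (v - u) + 1"
    using assms(2) by (auto simp: f_def split_double_label_def)
  have bound: "f v - f u < 3 ^ (j + 1)"
    using diff assms(3) two_pow_plus_two_le_three_pow[OF assms(1)] by simp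
  have odd: "odd (f v - f u)" using diff by simp
  have "Omega (f v - f u) < j + 1"
    using prime_factor_of_odd_ge_3[OF odd] odd_pos[OF odd] bound
    by (intro Omega_less_of_less_pow[of 3]) auto
  moreover have "f u + 2 \<le> f v" using diff assms(2) by linarith
  ultimately show ?thesis by simp
qed

lemma k_ppd_labeling_complete_upper_bound:
  assumes "j \<ge> 1" and "n \<le> 2 ^ (j + 1)"
  shows "k_ppd_labeling (K_vertices n) K_edges j (int \<circ> split_double_label j)"
  unfolding K_vertices_def
proof (rule k_ppd_labeling_of_increasing)
  fix u v assume "u < v" "v < n"
  let ?f = "split_double_label j"
  have "?f u + 2 \<le> ?f v" and "Omega (?f v - ?f u) \<le> j"
    using split_double_label_gap[OF assms(1) \<open>u < v\<close>] \<open>v < n\<close> assms(2) by auto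
  moreover have "nat (int (?f v) - int (?f u)) = ?f v - ?f u" by simp
  ultimately show "(int \<circ> ?f) u + 1 < (int \<circ> ?f) v \<and> Omega (nat ((int \<circ> ?f) v - (int \<circ> ?f) u)) \<le> j"
    by simp
qed

lemma ppn_complete_graph:
  assumes "j \<ge> 1" and "2 ^ j < n" and "n \<le> 2 ^ (j + 1)"
  shows "ppn (K_vertices n) K_edges = j"
  unfolding ppn_def
proof (rule Least_equality)
  show "1 \<le> j \<and> k_prime_product_graph (K_vertices n) K_edges j"
    using assms k_ppd_labeling_complete_upper_bound unfolding k_prime_product_graph_def by blast
next
  fix k assume "1 \<le> k \<and> k_prime_product_graph (K_vertices n) K_edges k"
  then show "j \<le> k"
    using k_ppd_labeling_complete_lower_bound[of j "K_vertices n" K_edges k] assms(2)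
    unfolding k_prime_product_graph_def K_vertices_def K_edges_def by auto
qed

theorem mainTheorem3:
  fixes n :: nat
  assumes "n \<ge> 3"
  shows "int (ppn (K_vertices n) K_edges) = \<lceil>log 2 (real n)\<rceil> - 1"
proof -
  define j where "j = ceillog2 n - 1"
  have "ceillog2 n \<ge> 2" using assms by (subst ceillog2_ge_iff) auto
  then have j: "ceillog2 n = j + 1" "j \<ge> 1" unfolding j_def by auto
  have "n \<le> 2 ^ (j + 1)" using le_two_power_ceillog2[of n] j(1) by simp
  moreover have "2 ^ j < n" using two_power_ceillog2_gt[of n] j(1) assms by simp
  ultimately have "ppn (K_vertices n) K_edges = j" using ppn_complete_graph j(2) by blast
  moreover have "\<lceil>log 2 (real n)\<rceil> = int j + 1"
    using j(1) assms unfolding ceillog2_def by auto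
  ultimately show ?thesis by simp
qed

end
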